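(* Let $g(x)=-\log|x|$ on $\mathbb{R}^2$. There exist bounded functions $Q_1,Q_2,Q_3\in C^0(\mathbb{R}^2\setminus\{0\})$ such that for every $\varphi\in C^\infty_c(\mathbb{R}^2;\mathbb{R}^2)$ there exist $G_{1,\varphi},G_{2,\varphi},G_{3,\varphi}\in C^0_0(\mathbb{R}^2\times\mathbb{R}^2)$ with $$\nabla g(x-y)\cdot(\varphi(x)-\varphi(y))=Q_1(x-y)G_{1,\varphi}(x,y)+Q_2(x-y)G_{2,\varphi}(x,y)+Q_3(x-y)G_{3,\varphi}(x,y)$$ for all $x\ne y$; the $Q_i$ do not depend on $\varphi$.
   Context: $C^0_0(\mathbb{R}^2\times\mathbb{R}^2)$ denotes continuous functions vanishing at infinity. *)

theory Defs
  imports "HOL-Analysis.Analysis"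
begin

definition g_log :: "real^2 \<Rightarrow> real" where
  "g_log x = - ln (norm x)"

definition partial_deriv :: "2 \<Rightarrow> (real^2 \<Rightarrow> real) \<Rightarrow> real^2 \<Rightarrow> real" where
  "partial_deriv i f x = frechet_derivative f (at x) (axis i 1)"

definition grad :: "(real^2 \<Rightarrow> real) \<Rightarrow> real^2 \<Rightarrow> real^2" where
  "grad f x = (\<chi> i. partial_deriv i f x)"

fun Ck :: "nat \<Rightarrow> (real^2 \<Rightarrow> real) \<Rightarrow> bool" where
  "Ck 0 f = continuous_on UNIV f"
| "Ck (Suc k) f = (f differentiable_on UNIV \<and> (\<forall>i. Ck k (partial_deriv i f)))"

definition smooth_real :: "(real^2 \<Rightarrow> real) \<Rightarrow> bool" where
  "smooth_real f = (\<forall>k. Ck k f)"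

definition Cinf_c :: "(real^2 \<Rightarrow> real^2) \<Rightarrow> bool" where
  "Cinf_c \<phi> = ((\<forall>j. smooth_real (\<lambda>x. \<phi> x $ j)) \<and> compact (closure {x. \<phi> x \<noteq> 0}))"

definition C00 :: "((real^2) \<times> (real^2) \<Rightarrow> real) \<Rightarrow> bool" where
  "C00 G = (continuous_on UNIV G \<and> (G \<longlongrightarrow> 0) at_infinity)"

end

theory Submission
  imports Defs
begin

(* Put z = x - y and w = sgn z, so that grad g (z) = - w / |z| and Q_ij(z) = w_i w_j, which is
   bounded and continuous away from 0. Expanding phi to first order at y with a cut-off linear
   term, phi x - phi y = cutoff z * D phi(y) z + R(x, y), gives
     grad g (z) . (phi x - phi y) = - cutoff z * (w . D phi(y) w) + W(x, y),
   where W = grad g (z) . R. The first term is a combination of w_1^2, w_1 w_2, w_2^2 with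
   coefficients - cutoff(x - y) d_i phi_j (y), which vanish at infinity because phi has compact
   support and the cut-off kills |x - y| >= 2; the term W is split as (w_1^2 + w_2^2) W.
   W extends continuously by 0 to the diagonal because R(x, y) = o(|x - y|) locally uniformly
   for phi in C^1, and W = O(1 / |x - y|) far from the diagonal, where R = phi x - phi y. *)

lemma partial_deriv_eq_grad_nth: "partial_deriv i f = (\<lambda>x. grad f x $ i)"
  by (simp add: grad_def)

lemma has_derivative_grad:
  assumes "f differentiable (at u)"
  shows "(f has_derivative (\<lambda>h. grad f u \<bullet> h)) (at u)"
proof -
  let ?f' = "frechet_derivative f (at u)"
  have f': "(f has_derivative ?f') (at u)"
    using assms by (rule frechet_derivative_works[THEN iffD1])
  have "?f' = (\<lambda>h. grad f u \<bullet> h)"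
  proof
    fix h :: "real^2"
    have "h = h$1 *\<^sub>R axis 1 1 + h$2 *\<^sub>R axis 2 1"
      by (simp add: vec_eq_iff axis_def forall_2)
    then have "?f' h = ?f' (h$1 *\<^sub>R axis 1 1 + h$2 *\<^sub>R axis 2 1)"
      by (rule arg_cong)
    also have "\<dots> = h$1 * ?f' (axis 1 1) + h$2 * ?f' (axis 2 1)"
      using has_derivative_linear[OF f'] by (simp add: linear_add linear_scale)
    finally have "?f' h = h$1 * ?f' (axis 1 1) + h$2 * ?f' (axis 2 1)" .
    then show "?f' h = grad f u \<bullet> h"
      by (simp add: grad_def partial_deriv_def inner_vec_def sum_2 mult.commute)
  qed
  with f' show ?thesis
    by simp
qed

lemma grad_g_log:
  assumes "z \<noteq> 0"
  shows "grad g_log z = - (z /\<^sub>R (norm z)\<^sup>2)"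
proof -
  have "(g_log has_derivative (\<lambda>h. - (inverse (norm z) * (h \<bullet> sgn z)))) (at z)"
    unfolding g_log_def[abs_def] using assms
    by (auto intro!: derivative_eq_intros has_derivative_norm)
  then have "frechet_derivative g_log (at z) = (\<lambda>h. - (inverse (norm z) * (h \<bullet> sgn z)))"
    by (rule frechet_derivative_at[symmetric])
  then have "grad g_log z $ i = (- (z /\<^sub>R (norm z)\<^sup>2)) $ i" for i
    by (simp add: grad_def partial_deriv_def inner_axis' sgn_div_norm power2_eq_square divide_inverse)
  then show ?thesis
    by (simp add: vec_eq_iff)
qed

lemma norm_grad_g_log:
  assumes "z \<noteq> 0"
  shows "norm (grad g_log z) = 1 / norm z"
  using assms by (simp add: grad_g_log power2_eq_square divide_inverse)

lemma grad_eq_0_if_locally_0: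
  assumes "open S" "u \<in> S" "\<And>x. x \<in> S \<Longrightarrow> f x = 0"
  shows "grad f u = 0"
proof -
  have "(f has_derivative (\<lambda>h. 0)) (at u)"
    by (rule has_derivative_transform_within_open[OF has_derivative_const assms(1,2)])
      (simp add: assms(3))
  then have "frechet_derivative f (at u) = (\<lambda>h. 0)"
    by (rule frechet_derivative_at[symmetric])
  then show ?thesis
    by (simp add: grad_def partial_deriv_def vec_eq_iff)
qed

lemma onorm_inner_diff_le:
  fixes a b :: "'a::real_inner"
  shows "onorm ((\<lambda>h. a \<bullet> h) - (\<lambda>h. b \<bullet> h)) \<le> norm (a - b)"
proof (rule onorm_bound)
  fix h :: 'a
  have "norm (((\<lambda>h. a \<bullet> h) - (\<lambda>h. b \<bullet> h)) h) = \<bar>(a - b) \<bullet> h\<bar>"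
    by (simp add: inner_diff_left)
  also have "\<dots> \<le> norm (a - b) * norm h"
    by (rule Cauchy_Schwarz_ineq2)
  finally show "norm (((\<lambda>h. a \<bullet> h) - (\<lambda>h. b \<bullet> h)) h) \<le> norm (a - b) * norm h" .
qed simp

lemma C1_remainder_le:
  fixes f :: "real^2 \<Rightarrow> real"
  assumes f: "f differentiable_on UNIV" and grad: "continuous_on UNIV (grad f)" and "0 < \<epsilon>"
  obtains \<delta> where "0 < \<delta>"
    "\<And>x y. x \<in> ball a \<delta> \<Longrightarrow> y \<in> ball a \<delta> \<Longrightarrow>
      \<bar>f x - f y - grad f y \<bullet> (x - y)\<bar> \<le> \<epsilon> * norm (x - y)"
proof -
  have "isCont (grad f) a"
    using grad by (simp add: continuous_on_eq_continuous_at)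
  then obtain \<delta> where "0 < \<delta>" and \<delta>: "\<And>u. dist u a < \<delta> \<Longrightarrow> dist (grad f u) (grad f a) < \<epsilon> / 2"
    using \<open>0 < \<epsilon>\<close> unfolding continuous_at_eps_delta by (meson half_gt_zero)
  have "\<bar>f x - f y - grad f y \<bullet> (x - y)\<bar> \<le> \<epsilon> * norm (x - y)"
    if x: "x \<in> ball a \<delta>" and y: "y \<in> ball a \<delta>" for x y
  proof -
    have "norm (f x - f y - grad f y \<bullet> (x - y)) \<le> norm (x - y) * \<epsilon>"
    proof (rule differentiable_bound_linearization[where S = "ball a \<delta>" and f' = "\<lambda>u h. grad f u \<bullet> h"])
      fix t :: real assume "t \<in> {0..1}"
      moreover have "y + t *\<^sub>R (x - y) = (1 - t) *\<^sub>R y + t *\<^sub>R x"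
        by (simp add: algebra_simps)
      ultimately show "y + t *\<^sub>R (x - y) \<in> ball a \<delta>"
        using convex_ball[of a \<delta>, unfolded convex_alt] x y by simp
    next
      fix u assume "u \<in> ball a \<delta>"
      have "f differentiable (at u)"
        using f by (simp add: differentiable_on_def)
      then show "(f has_derivative (\<lambda>h. grad f u \<bullet> h)) (at u within ball a \<delta>)"
        by (rule has_derivative_at_withinI[OF has_derivative_grad])
      have "dist (grad f u) (grad f y) < \<epsilon>"
        using \<delta>[of u] \<delta>[of y] \<open>u \<in> ball a \<delta>\<close> y dist_triangle_half_r[of "grad f a"]
        by (simp add: dist_commute)
      with onorm_inner_diff_le[of "grad f u" "grad f y"]
      show "onorm ((\<lambda>h. grad f u \<bullet> h) - (\<lambda>h. grad f y \<bullet> h)) \<le> \<epsilon>"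
        unfolding dist_norm by linarith
    qed (use y in auto)
    then show ?thesis
      by (simp add: mult.commute)
  qed
  with \<open>0 < \<delta>\<close> show ?thesis
    using that by blast
qed

definition C1_c :: "(real^2 \<Rightarrow> real^2) \<Rightarrow> bool" where
  "C1_c \<phi> \<longleftrightarrow>
    (\<forall>j. (\<lambda>x. \<phi> x $ j) differentiable_on UNIV \<and> continuous_on UNIV (grad (\<lambda>x. \<phi> x $ j))) \<and>
    bounded {x. \<phi> x \<noteq> 0}"

lemma Cinf_c_imp_C1_c:
  assumes "Cinf_c \<phi>"
  shows "C1_c \<phi>"
proof -
  have "Ck (Suc 0) (\<lambda>x. \<phi> x $ j)" for j
    using assms by (simp add: Cinf_c_def smooth_real_def)
  then have "(\<lambda>x. \<phi> x $ j) differentiable_on UNIV \<and> continuous_on UNIV (grad (\<lambda>x. \<phi> x $ j))" for j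
    unfolding grad_def by (auto intro: continuous_on_vec_lambda)
  moreover have "bounded {x. \<phi> x \<noteq> 0}"
    using assms unfolding Cinf_c_def by (meson bounded_subset closure_subset compact_imp_bounded)
  ultimately show ?thesis
    by (simp add: C1_c_def)
qed

lemma C1_c_vanishes_outside_ball:
  assumes "C1_c \<phi>"
  obtains M where "\<And>u. M < norm u \<Longrightarrow> \<phi> u = 0"
    and "\<And>u j. M < norm u \<Longrightarrow> grad (\<lambda>x. \<phi> x $ j) u = 0"
proof -
  obtain M where M: "\<And>x. \<phi> x \<noteq> 0 \<Longrightarrow> norm x \<le> M"
    using assms unfolding C1_c_def bounded_iff by auto
  then have zero: "\<phi> u = 0" if "M < norm u" for u
    using that by force
  have "grad (\<lambda>x. \<phi> x $ j) u = 0" if "M < norm u" for u j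
    by (rule grad_eq_0_if_locally_0[of "- cball 0 M"]) (use zero that in auto)
  with zero that show ?thesis
    by blast
qed

lemma continuous_on_C1_c:
  assumes "C1_c \<phi>"
  shows "continuous_on UNIV \<phi>"
proof -
  have "continuous_on UNIV (\<lambda>x. \<chi> j. \<phi> x $ j)"
    using assms unfolding C1_c_def
    by (intro continuous_on_vec_lambda differentiable_imp_continuous_on) blast
  then show ?thesis
    by simp
qed

lemma bounded_range_if_vanishes_outside_ball:
  fixes f :: "'a::{real_normed_vector, heine_borel} \<Rightarrow> 'b::real_normed_vector"
  assumes "continuous_on UNIV f" and "\<And>u. M < norm u \<Longrightarrow> f u = 0"
  shows "bounded (range f)"
proof -
  have "range f \<subseteq> insert 0 (f ` cball 0 M)"
    using assms(2) by (force simp: not_less)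
  moreover have "bounded (f ` cball 0 M)"
    by (intro compact_imp_bounded compact_continuous_image continuous_on_subset[OF assms(1)])
      auto
  ultimately show ?thesis
    by (meson bounded_insert bounded_subset)
qed

definition cutoff :: "'a::real_normed_vector \<Rightarrow> real" where
  "cutoff z = min 1 (max 0 (2 - norm z))"

definition taylor_remainder :: "(real^2 \<Rightarrow> real^2) \<Rightarrow> real^2 \<Rightarrow> real^2 \<Rightarrow> real^2" where
  "taylor_remainder \<phi> x y =
    \<phi> x - \<phi> y - cutoff (x - y) *\<^sub>R (\<chi> j. grad (\<lambda>u. \<phi> u $ j) y \<bullet> (x - y))"

lemma continuous_on_cutoff [continuous_intros]:
  "continuous_on S f \<Longrightarrow> continuous_on S (\<lambda>x. cutoff (f x))"
  unfolding cutoff_def by (intro continuous_intros)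

lemma C1_c_component_remainder_le:
  assumes "C1_c \<phi>" and "0 < \<epsilon>"
  obtains \<delta> where "0 < \<delta>"
    "\<And>x y. x \<in> ball a \<delta> \<Longrightarrow> y \<in> ball a \<delta> \<Longrightarrow>
      \<bar>\<phi> x $ j - \<phi> y $ j - grad (\<lambda>u. \<phi> u $ j) y \<bullet> (x - y)\<bar> \<le> \<epsilon> * norm (x - y)"
proof -
  have "(\<lambda>x. \<phi> x $ j) differentiable_on UNIV" "continuous_on UNIV (grad (\<lambda>x. \<phi> x $ j))"
    using assms(1) by (auto simp: C1_c_def)
  from C1_remainder_le[OF this assms(2), where a = a] that show ?thesis
    by blast
qed

lemma taylor_remainder_le:
  assumes "C1_c \<phi>" and "0 < \<epsilon>"
  obtains \<delta> where "0 < \<delta>"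
    "\<And>x y. x \<in> ball a \<delta> \<Longrightarrow> y \<in> ball a \<delta> \<Longrightarrow> norm (taylor_remainder \<phi> x y) \<le> \<epsilon> * norm (x - y)"
proof -
  have "0 < \<epsilon> / 2"
    using assms(2) by simp
  obtain \<delta>1 where "0 < \<delta>1" and \<delta>1: "\<And>x y. x \<in> ball a \<delta>1 \<Longrightarrow> y \<in> ball a \<delta>1 \<Longrightarrow>
      \<bar>\<phi> x $ 1 - \<phi> y $ 1 - grad (\<lambda>u. \<phi> u $ 1) y \<bullet> (x - y)\<bar> \<le> \<epsilon> / 2 * norm (x - y)"
    using C1_c_component_remainder_le[OF assms(1) \<open>0 < \<epsilon> / 2\<close>, where a = a and j = 1] by blast
  obtain \<delta>2 where "0 < \<delta>2" and \<delta>2: "\<And>x y. x \<in> ball a \<delta>2 \<Longrightarrow> y \<in> ball a \<delta>2 \<Longrightarrow>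
      \<bar>\<phi> x $ 2 - \<phi> y $ 2 - grad (\<lambda>u. \<phi> u $ 2) y \<bullet> (x - y)\<bar> \<le> \<epsilon> / 2 * norm (x - y)"
    using C1_c_component_remainder_le[OF assms(1) \<open>0 < \<epsilon> / 2\<close>, where a = a and j = 2] by blast
  define \<delta> where "\<delta> = min (1/2) (min \<delta>1 \<delta>2)"
  have "norm (taylor_remainder \<phi> x y) \<le> \<epsilon> * norm (x - y)"
    if x: "x \<in> ball a \<delta>" and y: "y \<in> ball a \<delta>" for x y
  proof -
    have "norm (x - y) \<le> 1"
      using x y dist_triangle2[of x y a] by (simp add: \<delta>_def dist_norm norm_minus_commute)
    then have "taylor_remainder \<phi> x y $ j = \<phi> x $ j - \<phi> y $ j - grad (\<lambda>u. \<phi> u $ j) y \<bullet> (x - y)" for j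
      by (simp add: taylor_remainder_def cutoff_def)
    then have "norm (taylor_remainder \<phi> x y) \<le>
        \<bar>\<phi> x $ 1 - \<phi> y $ 1 - grad (\<lambda>u. \<phi> u $ 1) y \<bullet> (x - y)\<bar> +
        \<bar>\<phi> x $ 2 - \<phi> y $ 2 - grad (\<lambda>u. \<phi> u $ 2) y \<bullet> (x - y)\<bar>"
      using norm_le_l1_cart[of "taylor_remainder \<phi> x y"] by (simp add: sum_2)
    also have "\<dots> \<le> \<epsilon> / 2 * norm (x - y) + \<epsilon> / 2 * norm (x - y)"
      using \<delta>1 \<delta>2 x y by (intro add_mono) (auto simp: \<delta>_def)
    finally show ?thesis
      by simp
  qed
  moreover have "0 < \<delta>"
    using \<open>0 < \<delta>1\<close> \<open>0 < \<delta>2\<close> by (simp add: \<delta>_def)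
  ultimately show ?thesis
    using that by blast
qed

lemma continuous_on_taylor_remainder:
  assumes "C1_c \<phi>"
  shows "continuous_on UNIV (\<lambda>p. taylor_remainder \<phi> (fst p) (snd p))"
proof -
  have "continuous_on UNIV \<phi>"
    using assms by (rule continuous_on_C1_c)
  then have "continuous_on UNIV (\<lambda>p. \<phi> (fst p))" "continuous_on UNIV (\<lambda>p. \<phi> (snd p))"
    by (auto intro: continuous_on_compose2[OF _ continuous_on_fst] continuous_on_compose2[OF _ continuous_on_snd] continuous_on_id)
  moreover have "continuous_on UNIV (\<lambda>p. grad (\<lambda>u. \<phi> u $ j) (snd p))" for j
    using assms unfolding C1_c_def
    by (auto intro: continuous_on_compose2[OF _ continuous_on_snd] continuous_on_id)
  ultimately show ?thesis
    unfolding taylor_remainder_def by (intro continuous_intros) auto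
qed

(* grad g_log is junk at 0; the value 0 on the diagonal is the continuous extension. *)
definition kernel_remainder :: "(real^2 \<Rightarrow> real^2) \<Rightarrow> (real^2) \<times> (real^2) \<Rightarrow> real" where
  "kernel_remainder \<phi> p =
    (if fst p = snd p then 0 else grad g_log (fst p - snd p) \<bullet> taylor_remainder \<phi> (fst p) (snd p))"

lemma abs_kernel_remainder_le:
  "\<bar>kernel_remainder \<phi> (x, y)\<bar> \<le> norm (taylor_remainder \<phi> x y) / norm (x - y)"
proof (cases "x = y")
  case False
  then have "\<bar>kernel_remainder \<phi> (x, y)\<bar> \<le> norm (grad g_log (x - y)) * norm (taylor_remainder \<phi> x y)"
    by (simp add: kernel_remainder_def Cauchy_Schwarz_ineq2)
  with False show ?thesis
    by (simp add: norm_grad_g_log)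
qed (simp add: kernel_remainder_def)

lemma isCont_kernel_remainder_off_diagonal:
  assumes "C1_c \<phi>" and "fst p \<noteq> snd p"
  shows "isCont (kernel_remainder \<phi>) p"
proof -
  let ?U = "{p :: (real^2) \<times> (real^2). fst p \<noteq> snd p}"
  let ?F = "\<lambda>p. - ((fst p - snd p) /\<^sub>R (norm (fst p - snd p))\<^sup>2) \<bullet> taylor_remainder \<phi> (fst p) (snd p)"
  have "open ?U"
    by (intro open_Collect_neq continuous_intros)
  have "continuous_on ?U ?F"
    by (intro continuous_intros continuous_on_subset[OF continuous_on_taylor_remainder[OF assms(1)]])
      auto
  then have "isCont ?F p"
    using \<open>open ?U\<close> assms(2) continuous_on_eq_continuous_at by blast
  moreover have "\<forall>\<^sub>F q in nhds p. kernel_remainder \<phi> q = ?F q"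
    using \<open>open ?U\<close> assms(2) unfolding eventually_nhds
    by (intro exI[of _ ?U]) (simp add: kernel_remainder_def grad_g_log)
  ultimately show ?thesis
    by (simp add: isCont_cong)
qed

lemma isCont_kernel_remainder_diagonal:
  assumes "C1_c \<phi>"
  shows "isCont (kernel_remainder \<phi>) (a, a)"
  unfolding continuous_at_eps_delta
proof (intro allI impI)
  fix \<epsilon> :: real assume "0 < \<epsilon>"
  then have "0 < \<epsilon> / 2"
    by simp
  then obtain \<delta> where "0 < \<delta>" and \<delta>: "\<And>x y. x \<in> ball a \<delta> \<Longrightarrow> y \<in> ball a \<delta> \<Longrightarrow>
      norm (taylor_remainder \<phi> x y) \<le> \<epsilon> / 2 * norm (x - y)"
    using taylor_remainder_le[OF assms] by blast
  have "\<bar>kernel_remainder \<phi> q\<bar> < \<epsilon>" if "dist q (a, a) < \<delta>" for q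
  proof -
    obtain x y where q: "q = (x, y)"
      by fastforce
    show ?thesis
    proof (cases "x = y")
      case False
      have "x \<in> ball a \<delta>" "y \<in> ball a \<delta>"
        using that dist_fst_le[of q "(a, a)"] dist_snd_le[of q "(a, a)"]
        by (auto simp: q dist_commute)
      then have "norm (taylor_remainder \<phi> x y) / norm (x - y) \<le> \<epsilon> / 2"
        using False \<delta> by (simp add: divide_le_eq)
      then show ?thesis
        using abs_kernel_remainder_le[of \<phi> x y] \<open>0 < \<epsilon>\<close> unfolding q by linarith
    qed (simp add: q kernel_remainder_def \<open>0 < \<epsilon>\<close>)
  qed
  moreover have "kernel_remainder \<phi> (a, a) = 0"
    by (simp add: kernel_remainder_def)
  ultimately show "\<exists>\<delta>>0. \<forall>q. dist q (a, a) < \<delta> \<longrightarrow> dist (kernel_remainder \<phi> q) (kernel_remainder \<phi> (a, a)) < \<epsilon>"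
    using \<open>0 < \<delta>\<close> by (auto simp: dist_real_def)
qed

lemma continuous_on_kernel_remainder:
  assumes "C1_c \<phi>"
  shows "continuous_on UNIV (kernel_remainder \<phi>)"
proof (intro continuous_at_imp_continuous_on ballI)
  fix p :: "(real^2) \<times> (real^2)"
  show "isCont (kernel_remainder \<phi>) p"
  proof (cases "fst p = snd p")
    case True
    then have "p = (fst p, fst p)"
      by (simp add: prod_eq_iff)
    with isCont_kernel_remainder_diagonal[OF assms] show ?thesis
      by metis
  qed (rule isCont_kernel_remainder_off_diagonal[OF assms])
qed

lemma tendsto_0_at_infinity_pairI:
  fixes G :: "'a::real_normed_vector \<times> 'a \<Rightarrow> real"
  assumes far: "\<And>x y. M < norm x \<Longrightarrow> M < norm y \<Longrightarrow> G (x, y) = 0"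
    and decay: "\<And>x y. R \<le> norm (x - y) \<Longrightarrow> \<bar>G (x, y)\<bar> \<le> B / norm (x - y)"
  shows "(G \<longlongrightarrow> 0) at_infinity"
proof (rule tendstoI)
  fix \<epsilon> :: real assume "0 < \<epsilon>"
  define T where "T = \<bar>R\<bar> + \<bar>B\<bar> / \<epsilon>"
  have "\<bar>G (x, y)\<bar> < \<epsilon>" if "2 * \<bar>M\<bar> + T + 1 \<le> norm (x, y)" for x y
  proof (cases "T < norm (x - y)")
    case True
    moreover have "0 \<le> \<bar>B\<bar> / \<epsilon>"
      using \<open>0 < \<epsilon>\<close> by simp
    ultimately have "R \<le> norm (x - y)" "\<bar>B\<bar> / \<epsilon> < norm (x - y)" "0 < norm (x - y)"
      unfolding T_def by linarith+
    then have "B / norm (x - y) < \<epsilon>"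
      using \<open>0 < \<epsilon>\<close> by (simp add: divide_less_eq pos_divide_less_eq mult.commute)
    with decay[OF \<open>R \<le> norm (x - y)\<close>] show ?thesis
      by linarith
  next
    case False
    have "norm (x, y) \<le> norm x + norm y"
      by (rule norm_Pair_le)
    moreover have "norm x \<le> norm y + norm (x - y)" "norm y \<le> norm x + norm (x - y)"
      using norm_triangle_ineq2[of x y] norm_triangle_ineq3[of x y] by auto
    ultimately have "M < norm x" "M < norm y"
      using that False by linarith+
    with far \<open>0 < \<epsilon>\<close> show ?thesis
      by simp
  qed
  then show "\<forall>\<^sub>F p in at_infinity. dist (G p) 0 < \<epsilon>"
    unfolding eventually_at_infinity by (metis dist_real_def diff_zero prod.collapse)
qed

lemma C00_diff: "C00 F \<Longrightarrow> C00 G \<Longrightarrow> C00 (\<lambda>p. F p - G p)"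
  unfolding C00_def by (auto intro: continuous_on_diff tendsto_diff[where a = 0 and b = 0, simplified])

lemma C00_uminus: "C00 F \<Longrightarrow> C00 (\<lambda>p. - F p)"
  unfolding C00_def by (auto intro: continuous_on_minus tendsto_minus[where a = 0, simplified])

lemma C00_kernel_remainder:
  assumes "C1_c \<phi>"
  shows "C00 (kernel_remainder \<phi>)"
proof -
  obtain M where \<phi>0: "\<And>u. M < norm u \<Longrightarrow> \<phi> u = 0"
    and grad0: "\<And>u j. M < norm u \<Longrightarrow> grad (\<lambda>x. \<phi> x $ j) u = 0"
    using C1_c_vanishes_outside_ball[OF assms] by blast
  obtain B where B: "\<And>u. norm (\<phi> u) \<le> B"
    using bounded_range_if_vanishes_outside_ball[OF continuous_on_C1_c[OF assms] \<phi>0]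
    by (auto simp: bounded_iff)
  have "(kernel_remainder \<phi> \<longlongrightarrow> 0) at_infinity"
  proof (rule tendsto_0_at_infinity_pairI)
    fix x y :: "real^2"
    assume "M < norm x" "M < norm y"
    then show "kernel_remainder \<phi> (x, y) = 0"
      by (simp add: kernel_remainder_def taylor_remainder_def \<phi>0 grad0 zero_vec_def[symmetric])
  next
    fix x y :: "real^2"
    assume "2 \<le> norm (x - y)"
    then have "norm (taylor_remainder \<phi> x y) = norm (\<phi> x - \<phi> y)"
      by (simp add: taylor_remainder_def cutoff_def)
    also have "\<dots> \<le> 2 * B"
      using norm_triangle_ineq4[of "\<phi> x" "\<phi> y"] B[of x] B[of y] by linarith
    finally show "\<bar>kernel_remainder \<phi> (x, y)\<bar> \<le> 2 * B / norm (x - y)"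
      using abs_kernel_remainder_le[of \<phi> x y] by (meson divide_right_mono norm_ge_zero order_trans)
  qed
  with continuous_on_kernel_remainder[OF assms] show ?thesis
    by (simp add: C00_def)
qed

lemma C00_cutoff_mult:
  assumes "continuous_on UNIV P" and "\<And>u. M < norm u \<Longrightarrow> P u = 0"
  shows "C00 (\<lambda>p. cutoff (fst p - snd p) * P (snd p))"
  unfolding C00_def
proof
  show "continuous_on UNIV (\<lambda>p :: (real^2) \<times> (real^2). cutoff (fst p - snd p) * P (snd p))"
    by (intro continuous_intros continuous_on_compose2[OF assms(1) continuous_on_snd] continuous_on_id)
      auto
  show "((\<lambda>p :: (real^2) \<times> (real^2). cutoff (fst p - snd p) * P (snd p)) \<longlongrightarrow> 0) at_infinity"
  proof (rule tendsto_0_at_infinity_pairI[where M = M and R = 2 and B = 0])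
    fix x y :: "real^2"
    show "M < norm y \<Longrightarrow> cutoff (fst (x, y) - snd (x, y)) * P (snd (x, y)) = 0"
      by (simp add: assms(2))
    show "2 \<le> norm (x - y) \<Longrightarrow> \<bar>cutoff (fst (x, y) - snd (x, y)) * P (snd (x, y))\<bar> \<le> 0 / norm (x - y)"
      by (simp add: cutoff_def)
  qed
qed

lemma C00_cutoff_mult_partial_deriv:
  assumes "C1_c \<phi>"
  shows "C00 (\<lambda>p. cutoff (fst p - snd p) * partial_deriv i (\<lambda>u. \<phi> u $ j) (snd p))"
proof -
  obtain M where "\<And>u. M < norm u \<Longrightarrow> \<phi> u = 0"
    and grad0: "\<And>u j. M < norm u \<Longrightarrow> grad (\<lambda>x. \<phi> x $ j) u = 0"
    using C1_c_vanishes_outside_ball[OF assms] by blast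
  have "M < norm u \<Longrightarrow> partial_deriv i (\<lambda>u. \<phi> u $ j) u = 0" for u
    using grad0 by (simp add: partial_deriv_eq_grad_nth)
  moreover have "continuous_on UNIV (partial_deriv i (\<lambda>u. \<phi> u $ j))"
    using assms unfolding C1_c_def partial_deriv_eq_grad_nth by (blast intro: continuous_on_component)
  ultimately show ?thesis
    by (intro C00_cutoff_mult[where P = "partial_deriv i (\<lambda>u. \<phi> u $ j)"])
qed

lemma abs_sgn_nth_mult_le: "\<bar>sgn (z :: real^'n) $ i * sgn z $ j\<bar> \<le> 1"
proof -
  have "\<bar>sgn z $ k\<bar> \<le> 1" for k
    using component_le_norm_cart[of "sgn z" k] by (simp add: norm_sgn split: if_splits)
  then show ?thesis
    by (simp add: abs_mult mult_le_one)
qed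

lemma grad_g_log_inner_decomposition:
  fixes \<phi> :: "real^2 \<Rightarrow> real^2"
  assumes "x \<noteq> y"
  defines "\<omega> \<equiv> sgn (x - y)" and "W \<equiv> kernel_remainder \<phi> (x, y)" and "c \<equiv> cutoff (x - y)"
    and "D \<equiv> \<lambda>i j. partial_deriv i (\<lambda>u. \<phi> u $ j) y"
  shows "grad g_log (x - y) \<bullet> (\<phi> x - \<phi> y) =
    \<omega>$1 * \<omega>$1 * (W - c * D 1 1) + \<omega>$1 * \<omega>$2 * (- (c * D 2 1) - c * D 1 2) + \<omega>$2 * \<omega>$2 * (W - c * D 2 2)"
proof -
  define n where "n = norm (x - y)"
  define J where "J h = (\<chi> j. grad (\<lambda>u. \<phi> u $ j) y \<bullet> h)" for h
  have "0 < n"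
    using assms(1) by (simp add: n_def)
  have z: "x - y = n *\<^sub>R \<omega>" and grad: "grad g_log (x - y) = - (\<omega> /\<^sub>R n)"
    using assms(1) by (simp_all add: n_def \<omega>_def sgn_div_norm grad_g_log power2_eq_square)
  have "J (x - y) = n *\<^sub>R J \<omega>"
    by (simp add: z J_def vec_eq_iff)
  then have "grad g_log (x - y) \<bullet> (c *\<^sub>R J (x - y)) = - c * (\<omega> \<bullet> J \<omega>)"
    using \<open>0 < n\<close> by (simp add: grad)
  moreover have "\<phi> x - \<phi> y = taylor_remainder \<phi> x y + c *\<^sub>R J (x - y)"
    by (simp add: taylor_remainder_def c_def J_def)
  ultimately have "grad g_log (x - y) \<bullet> (\<phi> x - \<phi> y) = W - c * (\<omega> \<bullet> J \<omega>)"
    using assms(1) by (simp add: W_def kernel_remainder_def inner_add_right)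
  moreover have "\<omega> \<bullet> J \<omega> = \<omega>$1 * \<omega>$1 * D 1 1 + \<omega>$1 * \<omega>$2 * (D 2 1 + D 1 2) + \<omega>$2 * \<omega>$2 * D 2 2"
    by (simp add: D_def J_def grad_def inner_vec_def sum_2 algebra_simps)
  moreover have "\<omega>$1 * \<omega>$1 + \<omega>$2 * \<omega>$2 = 1"
    using norm_sgn[of "x - y"] assms(1) unfolding \<omega>_def[symmetric]
    by (simp add: norm_vec_def L2_set_def sum_2 power2_eq_square)
  ultimately show ?thesis
    by algebra
qed

theorem lemma6p2:
  "\<exists>Q1 Q2 Q3 :: real^2 \<Rightarrow> real.
     (\<forall>Q\<in>{Q1, Q2, Q3}. continuous_on (UNIV - {0}) Q \<and> bounded (Q ` (UNIV - {0}))) \<and>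
     (\<forall>\<phi>. Cinf_c \<phi> \<longrightarrow>
        (\<exists>G1 G2 G3. C00 G1 \<and> C00 G2 \<and> C00 G3 \<and>
           (\<forall>x y. x \<noteq> y \<longrightarrow>
              grad g_log (x - y) \<bullet> (\<phi> x - \<phi> y)
              = Q1 (x - y) * G1 (x, y) + Q2 (x - y) * G2 (x, y) + Q3 (x - y) * G3 (x, y))))"
proof -
  let ?Q = "\<lambda>i j (z :: real^2). sgn z $ i * sgn z $ j"
  have Q: "continuous_on (UNIV - {0}) (?Q i j) \<and> bounded (?Q i j ` (UNIV - {0}))" for i j
    using abs_sgn_nth_mult_le by (auto intro!: continuous_intros simp: bounded_iff)
  have G: "\<exists>G1 G2 G3. C00 G1 \<and> C00 G2 \<and> C00 G3 \<and>
      (\<forall>x y. x \<noteq> y \<longrightarrow> grad g_log (x - y) \<bullet> (\<phi> x - \<phi> y) =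
        ?Q 1 1 (x - y) * G1 (x, y) + ?Q 1 2 (x - y) * G2 (x, y) + ?Q 2 2 (x - y) * G3 (x, y))"
    if "Cinf_c \<phi>" for \<phi>
  proof -
    have \<phi>: "C1_c \<phi>"
      using that by (rule Cinf_c_imp_C1_c)
    let ?cD = "\<lambda>i j p. cutoff (fst p - snd p) * partial_deriv i (\<lambda>u. \<phi> u $ j) (snd p)"
    have cD: "C00 (?cD i j)" for i j
      using \<phi> by (rule C00_cutoff_mult_partial_deriv)
    have W: "C00 (kernel_remainder \<phi>)"
      using \<phi> by (rule C00_kernel_remainder)
    have "C00 (\<lambda>p. kernel_remainder \<phi> p - ?cD 1 1 p)" "C00 (\<lambda>p. - ?cD 2 1 p - ?cD 1 2 p)"
      "C00 (\<lambda>p. kernel_remainder \<phi> p - ?cD 2 2 p)"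
      by (intro C00_diff C00_uminus cD W)+
    then show ?thesis
      using grad_g_log_inner_decomposition[of _ _ \<phi>] by fastforce
  qed
  show ?thesis
    by (rule exI[of _ "?Q 1 1"], rule exI[of _ "?Q 1 2"], rule exI[of _ "?Q 2 2"]) (use Q G in auto)
qed

end
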